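(* Let $r\geq 2$ be an integer, and let $x_i$ ($1\le i\le r$) and $y_{i,j}$ ($1\le i\le j\le r$) be formal variables. Define \[ L(x,y)=\sum_{T\in\mathcal{U}_r}\prod_{v=2}^r\Big(x_{f_T(v)}\sum_{u\in \mathfrak{h}_T(v)} y_{v,u}\Big),\qquad R(x,y)=x_1\,y_{r,r}\prod_{i=2}^{r-1}\Bigg(\sum_{j=1}^{i} x_j\,y_{i,i}+\sum_{j=i+1}^{r} x_i\,y_{i,j}\Bigg). \] Then \[ \text{(a)}\quad y_{1,1}\,L(x,y)=\sum_{\pi\in\Pi_1(\{1,\dots,r\})} D(\pi)\sum_{T\in\mathcal{E}(\pi)}\kappa(T), \] \[ \text{(b)}\quad y_{1,1}\,R(x,y)=\sum_{\pi\in\Pi_1(\{1,\dots,r\})} D(\pi)\sum_{c\in\mathcal{C}(\pi)}\omega(c,\pi). \]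
   Context: Rooted trees have edges oriented towards the root; the head of an edge is the father of its tail (son); $f_T(v)$ is the father of a non-root vertex $v$. Descendants of a vertex are its sons and recursively their descendants; $u$ is a descendant of $v$ iff $v$ is an ancestor of $u$. An unordered increasing tree on a finite set $\mathcal{S}$ of positive integers is a rooted tree with vertex-set $\mathcal{S}$, sons unordered, such that every son has a larger label than its father. $\mathcal{U}_r$ is the set of unordered increasing trees on $\{1,\dots,r\}$. The hook $\mathfrak{h}_T(v)$ is $v$ together with its descendants. For an unordered increasing tree $T$, $\sigma_i(T)$ is the number of sons of $i$ and $\kappa(T)=\prod_{i\in V(T)}x_i^{\sigma_i(T)}$. $\Pi_1(\{1,\dots,r\})$ is the set of set partitions $\pi$ of $\{1,\dots,r\}$ having $\{1\}$ as a block. If $\pi$ has $k$ blocks, they are indexed $\pi_1,\dots,\pi_k$ so that their maxima $\mu_i=\max\pi_i$ satisfy $\mu_1<\dots<\mu_k$ (so $\pi_1=\{1\}$, $\mu_1=1$, $\mu_k=r$). A function $g:\mathcal{S}\to\mathcal{S}$ is dominating if $g(i)\ge i$ for all $i$; its weight is $\mathrm{wt}_g=\prod_{i\in\mathcal{S}}y_{i,g(i)}$. Its induced partition is the partition of $\mathcal{S}$ into the vertex-sets of the connected components (ignoring orientation) of the digraph with edges $(i,g(i))$. $\mathcal{D}(\pi)$ is the set of dominating functions on $\{1,\dots,r\}$ with induced partition $\pi$, and $D(\pi)=\sum_{g\in\mathcal{D}(\pi)}\mathrm{wt}_g$. $\mathcal{E}(\pi)$ is the set of unordered increasing trees on $\{1,\dots,r\}$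 such that for every two elements $i<j$ in the same block of $\pi$, $i$ is an ancestor of $j$. $\mathcal{C}(\pi)=\{(c_2,\dots,c_{k-1}):1\le c_i\le\mu_i\}$ (containing only the empty list if $k=2$), and for $c\in\mathcal{C}(\pi)$, \[ \omega(c,\pi)=\frac{x_{c_2}\cdots x_{c_{k-1}}}{x_{\mu_2}\cdots x_{\mu_k}}\prod_{i=1}^r x_i. \] *)

theory Defs
  imports Main "HOL-Library.Disjoint_Sets" "HOL-Library.FuncSet"
begin

(* An unordered increasing tree on {1..r} is represented by its father map:
   T v = f_T(v) for the non-root vertices v in {2..r} (the root is 1, the
   smallest label); increasing means f_T(v) < v. *)
definition incr_trees :: "nat \<Rightarrow> (nat \<Rightarrow> nat) set" where
  "incr_trees r = Pi\<^sub>E {2..r} (\<lambda>v. {1..<v})"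

inductive is_desc :: "nat \<Rightarrow> (nat \<Rightarrow> nat) \<Rightarrow> nat \<Rightarrow> nat \<Rightarrow> bool"
  for r T where
  son: "2 \<le> u \<Longrightarrow> u \<le> r \<Longrightarrow> T u = v \<Longrightarrow> is_desc r T u v"
| step: "2 \<le> u \<Longrightarrow> u \<le> r \<Longrightarrow> is_desc r T (T u) v \<Longrightarrow> is_desc r T u v"

definition hook :: "nat \<Rightarrow> (nat \<Rightarrow> nat) \<Rightarrow> nat \<Rightarrow> nat set" where
  "hook r T v = insert v {u \<in> {1..r}. is_desc r T u v}"

definition nsons :: "nat \<Rightarrow> (nat \<Rightarrow> nat) \<Rightarrow> nat \<Rightarrow> nat" where
  "nsons r T i = card {v \<in> {2..r}. T v = i}"

definition kappa :: "nat \<Rightarrow> (nat \<Rightarrow> 'a::comm_ring_1) \<Rightarrow> (nat \<Rightarrow> nat) \<Rightarrow> 'a" where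
  "kappa r x T = (\<Prod>i\<in>{1..r}. x i ^ nsons r T i)"

definition Lpoly :: "nat \<Rightarrow> (nat \<Rightarrow> 'a::comm_ring_1) \<Rightarrow> (nat \<Rightarrow> nat \<Rightarrow> 'a) \<Rightarrow> 'a" where
  "Lpoly r x y = (\<Sum>T\<in>incr_trees r. \<Prod>v\<in>{2..r}. x (T v) * (\<Sum>u\<in>hook r T v. y v u))"

definition Rpoly :: "nat \<Rightarrow> (nat \<Rightarrow> 'a::comm_ring_1) \<Rightarrow> (nat \<Rightarrow> nat \<Rightarrow> 'a) \<Rightarrow> 'a" where
  "Rpoly r x y = x 1 * y r r *
     (\<Prod>i\<in>{2..r-1}. (\<Sum>j\<in>{1..i}. x j * y i i) + (\<Sum>j\<in>{i+1..r}. x i * y i j))"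

definition Pi1 :: "nat \<Rightarrow> nat set set set" where
  "Pi1 r = {P. partition_on {1..r} P \<and> {1} \<in> P}"

(* mu P i = maximum of the i-th block (1-indexed, blocks ordered by maxima) *)
definition mu :: "nat set set \<Rightarrow> nat \<Rightarrow> nat" where
  "mu P i = sorted_list_of_set (Max ` P) ! (i - 1)"

definition dom_funs :: "nat \<Rightarrow> (nat \<Rightarrow> nat) set" where
  "dom_funs r = Pi\<^sub>E {1..r} (\<lambda>i. {i..r})"

definition wt :: "nat \<Rightarrow> (nat \<Rightarrow> nat \<Rightarrow> 'a::comm_ring_1) \<Rightarrow> (nat \<Rightarrow> nat) \<Rightarrow> 'a" where
  "wt r y g = (\<Prod>i\<in>{1..r}. y i (g i))"

definition induced_partition :: "nat \<Rightarrow> (nat \<Rightarrow> nat) \<Rightarrow> nat set set" where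
  "induced_partition r g =
     (let E = {(i, g i) | i. i \<in> {1..r}} in {1..r} // ((E \<union> E\<inverse>)\<^sup>*))"

definition Dsum :: "nat \<Rightarrow> (nat \<Rightarrow> nat \<Rightarrow> 'a::comm_ring_1) \<Rightarrow> nat set set \<Rightarrow> 'a" where
  "Dsum r y P = (\<Sum>g\<in>{g \<in> dom_funs r. induced_partition r g = P}. wt r y g)"

definition Etrees :: "nat \<Rightarrow> nat set set \<Rightarrow> (nat \<Rightarrow> nat) set" where
  "Etrees r P = {T \<in> incr_trees r.
      \<forall>B\<in>P. \<forall>i\<in>B. \<forall>j\<in>B. i < j \<longrightarrow> is_desc r T j i}"

(* C(pi): lists (c_2,...,c_{k-1}) with 1 <= c_i <= mu_i, as functions on {2..k-1} *)
definition Clists :: "nat set set \<Rightarrow> (nat \<Rightarrow> nat) set" where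
  "Clists P = Pi\<^sub>E {2..card P - 1} (\<lambda>i. {1..mu P i})"

(* omega(c,pi) = x_{c_2}...x_{c_{k-1}} / (x_{mu_2}...x_{mu_k}) * prod_{i=1}^r x_i,
   written as the monomial it is (the mu_i are distinct elements of {1..r}) *)
definition omega :: "nat \<Rightarrow> (nat \<Rightarrow> 'a::comm_ring_1) \<Rightarrow> (nat \<Rightarrow> nat) \<Rightarrow> nat set set \<Rightarrow> 'a" where
  "omega r x c P = (\<Prod>i\<in>{2..card P - 1}. x (c i)) *
      (\<Prod>i\<in>{1..r} - mu P ` {2..card P}. x i)"

end

theory Submission
  imports Defs
begin

text \<open>A dominating function \<open>g\<close> moves every point upwards until it reaches a fixed point, and the
  blocks of its induced partition are the fibres of the resulting map onto the fixed points. So the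
  maximum of a block is its fixed point, \<open>{1}\<close> is a block iff \<open>g 1 = 1\<close>, and both right-hand sides
  become sums of \<open>wt g\<close> times a weight over the dominating functions fixing \<open>1\<close>.

  For (a), expanding the hook sums shows that \<open>y\<^sub>1\<^sub>1 L\<close> sums \<open>wt g \<cdot> \<kappa>(T)\<close> over the pairs \<open>(T, g)\<close> with
  \<open>g v\<close> in the hook of \<open>v\<close> for all \<open>v \<ge> 2\<close>. For fixed \<open>g\<close> these are exactly the trees of
  \<open>E(\<pi>(g))\<close>: iterating \<open>g\<close> from any point of a block stays among its descendants and reaches the
  common fixed point, and the ancestors of a vertex form a chain.

  For (b), the block maxima other than \<open>1\<close> are the fixed points of \<open>g\<close> other than \<open>1\<close>, so the sum of
  \<open>\<omega>(c, \<pi>(g))\<close> over \<open>c\<close> is \<open>x\<^sub>1\<close> times the product over \<open>1 < i < r\<close> of \<open>x\<^sub>1 + \<dots> + x\<^sub>i\<close> or \<open>x\<^sub>i\<close>,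
  according as \<open>g i = i\<close> or not; summed against \<open>wt g\<close> this factors row by row into \<open>y\<^sub>1\<^sub>1 R\<close>.\<close>

locale dominating_function =
  fixes r :: nat and g :: "nat \<Rightarrow> nat"
  assumes dominating: "g \<in> dom_funs r"
begin

lemma g_mem: "i \<in> {1..r} \<Longrightarrow> g i \<in> {i..r}"
  using dominating by (auto simp: dom_funs_def)

lemma funpow_mem: "i \<in> {1..r} \<Longrightarrow> (g ^^ n) i \<in> {i..r}"
proof (induction n)
  case (Suc n)
  then show ?case using g_mem[of "(g ^^ n) i"] by auto
qed simp

lemma funpow_fixed_or_ge: "i \<in> {1..r} \<Longrightarrow> g ((g ^^ n) i) = (g ^^ n) i \<or> i + n \<le> (g ^^ n) i"
proof (induction n)
  case (Suc n)
  have "(g ^^ n) i \<in> {1..r}"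
    using funpow_mem[OF Suc.prems, of n] Suc.prems by auto
  then have "(g ^^ n) i \<le> g ((g ^^ n) i)"
    using g_mem by auto
  with Suc show ?case by (cases "g ((g ^^ n) i) = (g ^^ n) i") auto
qed simp

text \<open>Iterating \<open>g\<close> strictly increases a point until it becomes fixed, so \<open>r\<close> iterations
  reach the fixed point above every \<open>i\<close>.\<close>
definition sink :: "nat \<Rightarrow> nat" where
  "sink i = (g ^^ r) i"

definition fixpoints :: "nat set" where
  "fixpoints = {m \<in> {1..r}. g m = m}"

definition block :: "nat \<Rightarrow> nat set" where
  "block m = {i \<in> {1..r}. sink i = m}"

lemma sink_mem: "i \<in> {1..r} \<Longrightarrow> sink i \<in> {i..r}"
  unfolding sink_def by (rule funpow_mem)

lemma sink_in_fixpoints: "i \<in> {1..r} \<Longrightarrow> sink i \<in> fixpoints"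
  using funpow_fixed_or_ge[of i r] sink_mem[of i] by (auto simp: sink_def fixpoints_def)

lemma sink_of_fixed: "g m = m \<Longrightarrow> sink m = m"
proof -
  assume "g m = m"
  then have "(g ^^ n) m = m" for n by (induction n) auto
  then show ?thesis unfolding sink_def .
qed

lemma sink_g: "i \<in> {1..r} \<Longrightarrow> sink (g i) = sink i"
  using sink_in_fixpoints[of i] unfolding sink_def fixpoints_def by (simp add: funpow_swap1)

definition edges :: "(nat \<times> nat) set" where
  "edges = {(i, g i) | i. i \<in> {1..r}}"

lemma funpow_in_rtrancl_edges: "i \<in> {1..r} \<Longrightarrow> (i, (g ^^ n) i) \<in> edges\<^sup>*"
proof (induction n)
  case (Suc n)
  have "(g ^^ n) i \<in> {1..r}"
    using funpow_mem[OF Suc.prems, of n] Suc.prems by auto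
  then have "((g ^^ n) i, (g ^^ Suc n) i) \<in> edges"
    unfolding edges_def by auto
  with Suc show ?case by (meson rtrancl.rtrancl_into_rtrancl)
qed simp

lemma connected_iff_same_sink:
  assumes a: "a \<in> {1..r}"
  shows "(a, b) \<in> (edges \<union> edges\<inverse>)\<^sup>* \<longleftrightarrow> b \<in> {1..r} \<and> sink b = sink a"
proof
  assume "(a, b) \<in> (edges \<union> edges\<inverse>)\<^sup>*"
  then show "b \<in> {1..r} \<and> sink b = sink a"
  proof (induction rule: rtrancl_induct)
    case (step b c)
    then show ?case
      using g_mem sink_g unfolding edges_def by fastforce
  qed (use a in simp)
next
  assume b: "b \<in> {1..r} \<and> sink b = sink a"
  have to_sink: "(i, sink i) \<in> (edges \<union> edges\<inverse>)\<^sup>*" if "i \<in> {1..r}" for i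
    using funpow_in_rtrancl_edges[OF that] rtrancl_mono[of edges "edges \<union> edges\<inverse>"]
    unfolding sink_def by blast
  have "sym ((edges \<union> edges\<inverse>)\<^sup>*)"
    by (simp add: sym_Un_converse sym_rtrancl)
  then have "(sink b, b) \<in> (edges \<union> edges\<inverse>)\<^sup>*"
    using to_sink b by (meson symD)
  with to_sink[OF a] b show "(a, b) \<in> (edges \<union> edges\<inverse>)\<^sup>*"
    by (metis rtrancl_trans)
qed

lemma induced_partition_eq_blocks: "induced_partition r g = block ` fixpoints"
proof -
  have "induced_partition r g = (\<lambda>a. (edges \<union> edges\<inverse>)\<^sup>* `` {a}) ` {1..r}"
    unfolding induced_partition_def edges_def quotient_def Let_def by blast
  also have "\<dots> = (\<lambda>a. block (sink a)) ` {1..r}"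
    using connected_iff_same_sink by (intro image_cong) (auto simp: block_def)
  also have "\<dots> = block ` (sink ` {1..r})"
    by (simp add: image_image)
  also have "sink ` {1..r} = fixpoints"
    using sink_in_fixpoints sink_of_fixed by (force simp: fixpoints_def)
  finally show ?thesis .
qed

lemma block_subset: "block m \<subseteq> {1..m}"
  using sink_mem by (auto simp: block_def)

lemma mem_block_self: "m \<in> fixpoints \<Longrightarrow> m \<in> block m"
  using sink_of_fixed by (simp add: fixpoints_def block_def)

lemma Max_block: "m \<in> fixpoints \<Longrightarrow> Max (block m) = m"
  using block_subset[of m] mem_block_self[of m] by (intro Max_eqI) (auto simp: block_def)

lemma Max_induced_partition: "Max ` induced_partition r g = {m \<in> {1..r}. g m = m}"
  unfolding induced_partition_eq_blocks image_image
  using Max_block by (simp add: fixpoints_def)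

lemma partition_on_blocks: "partition_on {1..r} (block ` fixpoints)"
proof (rule partition_onI)
  show "\<Union> (block ` fixpoints) = {1..r}"
    using sink_in_fixpoints by (auto simp: block_def)
  show "disjnt B B'" if "B \<in> block ` fixpoints" "B' \<in> block ` fixpoints" "B \<noteq> B'" for B B'
    using that by (auto simp: disjnt_def block_def)
  show "{} \<notin> block ` fixpoints"
    using mem_block_self by blast
qed

lemma induced_partition_in_Pi1_iff:
  assumes "1 \<le> r"
  shows "induced_partition r g \<in> Pi1 r \<longleftrightarrow> g 1 = 1"
proof
  assume "induced_partition r g \<in> Pi1 r"
  then obtain m where m: "m \<in> fixpoints" "block m = {1}"
    by (auto simp: Pi1_def induced_partition_eq_blocks)
  then show "g 1 = 1"
    using mem_block_self[OF m(1)] by (auto simp: fixpoints_def)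
next
  assume "g 1 = 1"
  with assms have fix1: "1 \<in> fixpoints"
    by (simp add: fixpoints_def)
  then have "block 1 = {1}"
    using block_subset[of 1] mem_block_self by fastforce
  with fix1 have "{1} \<in> block ` fixpoints"
    by (metis image_eqI)
  then show "induced_partition r g \<in> Pi1 r"
    using partition_on_blocks by (simp add: Pi1_def induced_partition_eq_blocks)
qed

end

lemma is_desc_mem: "is_desc r T u v \<Longrightarrow> u \<in> {2..r}"
  by (induction rule: is_desc.induct) auto

lemma mem_hook_iff: "u \<in> hook r T v \<longleftrightarrow> u = v \<or> is_desc r T u v"
  using is_desc_mem by (fastforce simp: hook_def)

lemma is_desc_trans: "is_desc r T u v \<Longrightarrow> is_desc r T v w \<Longrightarrow> is_desc r T u w"
  by (induction rule: is_desc.induct) (auto intro: is_desc.step)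

lemma hook_trans: "u \<in> hook r T v \<Longrightarrow> v \<in> hook r T w \<Longrightarrow> u \<in> hook r T w"
  using is_desc_trans by (auto simp: mem_hook_iff)

lemma father_mem_hook: "is_desc r T u v \<Longrightarrow> T u \<in> hook r T v"
  by (cases rule: is_desc.cases) (auto simp: mem_hook_iff)

locale increasing_tree =
  fixes r :: nat and T :: "nat \<Rightarrow> nat"
  assumes increasing: "T \<in> incr_trees r"
begin

lemma father_less: "v \<in> {2..r} \<Longrightarrow> T v \<in> {1..<v}"
  using increasing by (auto simp: incr_trees_def)

lemma is_desc_less: "is_desc r T u v \<Longrightarrow> v < u"
  by (induction rule: is_desc.induct) (use father_less in fastforce)+

lemma hook_subset: "v \<le> r \<Longrightarrow> hook r T v \<subseteq> {v..r}"
  using is_desc_less is_desc_mem by (fastforce simp: hook_def)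

lemma is_desc_of_common_desc:
  "is_desc r T u i \<Longrightarrow> u \<in> hook r T j \<Longrightarrow> i < j \<Longrightarrow> is_desc r T j i"
proof (induction arbitrary: j rule: is_desc.induct)
  case (son u)
  then show ?case
    using father_mem_hook is_desc_less by (fastforce simp: mem_hook_iff intro: is_desc.son)
next
  case (step u)
  then show ?case
    using father_mem_hook by (fastforce simp: mem_hook_iff intro: is_desc.step)
qed

text \<open>As \<open>u \<in> hook r T v\<close> means that \<open>v\<close> is \<open>u\<close> or an ancestor of \<open>u\<close>, this says that the
  ancestors of a vertex form a chain ordered by their labels.\<close>
lemma hook_chain:
  assumes "u \<in> hook r T i" and "u \<in> hook r T j" and "i < j"
  shows "j \<in> hook r T i"
proof (cases "u = i")
  case True
  with assms(2,3) show ?thesis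
    by (auto simp: mem_hook_iff dest: is_desc_less)
next
  case False
  with assms(1) have "is_desc r T u i"
    by (simp add: mem_hook_iff)
  from is_desc_of_common_desc[OF this assms(2,3)] show ?thesis
    by (simp add: mem_hook_iff)
qed

lemma prod_father_eq_kappa: "(\<Prod>v\<in>{2..r}. x (T v)) = kappa r x T"
proof -
  have "(\<Prod>v\<in>{2..r}. x (T v)) = (\<Prod>i\<in>{1..r}. \<Prod>v\<in>{v \<in> {2..r}. T v = i}. x (T v))"
    by (rule prod.group[symmetric]) (use father_less in force)+
  also have "\<dots> = (\<Prod>i\<in>{1..r}. x i ^ nsons r T i)"
    unfolding nsons_def by (intro prod.cong refl) simp
  finally show ?thesis
    unfolding kappa_def .
qed

end

context dominating_function
begin

lemma funpow_mem_hook: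
  assumes g1: "g 1 = 1" and hooks: "\<forall>v\<in>{2..r}. g v \<in> hook r T v" and i: "i \<in> {1..r}"
  shows "(g ^^ n) i \<in> hook r T i"
proof (induction n)
  case (Suc n)
  have "(g ^^ n) i \<in> {1..r}"
    using funpow_mem[OF i, of n] i by auto
  then have "g ((g ^^ n) i) \<in> hook r T ((g ^^ n) i)"
    using hooks g1 by (cases "(g ^^ n) i = 1") (auto simp: hook_def)
  with Suc show ?case
    using hook_trans by auto
qed (simp add: hook_def)

lemma g_mem_hook_if_blocks_ordered:
  assumes blocks: "\<forall>B\<in>induced_partition r g. \<forall>i\<in>B. \<forall>j\<in>B. i < j \<longrightarrow> is_desc r T j i"
    and v: "v \<in> {2..r}"
  shows "g v \<in> hook r T v"
proof (cases "g v = v")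
  case False
  with v have "v < g v"
    using g_mem[of v] by auto
  moreover have "v \<in> block (sink v)" "g v \<in> block (sink v)" "sink v \<in> fixpoints"
    using v sink_g[of v] sink_in_fixpoints[of v] g_mem[of v] by (auto simp: block_def)
  ultimately show ?thesis
    using blocks by (auto simp: mem_hook_iff induced_partition_eq_blocks)
qed (simp add: hook_def)

lemma blocks_ordered_if_g_mem_hook:
  assumes T: "increasing_tree r T" and g1: "g 1 = 1" and hooks: "\<forall>v\<in>{2..r}. g v \<in> hook r T v"
    and B: "B \<in> induced_partition r g" "i \<in> B" "j \<in> B" and "i < j"
  shows "is_desc r T j i"
proof -
  from B have "i \<in> {1..r}" "j \<in> {1..r}" "sink i = sink j"
    by (auto simp: block_def induced_partition_eq_blocks)
  then have "j \<in> hook r T i"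
    using increasing_tree.hook_chain[OF T] funpow_mem_hook[OF g1 hooks] \<open>i < j\<close>
    unfolding sink_def by metis
  with \<open>i < j\<close> show ?thesis
    by (simp add: mem_hook_iff)
qed

lemma Etrees_induced_partition:
  assumes "g 1 = 1"
  shows "Etrees r (induced_partition r g) = {T \<in> incr_trees r. \<forall>v\<in>{2..r}. g v \<in> hook r T v}"
  using g_mem_hook_if_blocks_ordered blocks_ordered_if_g_mem_hook[OF increasing_tree.intro assms]
  unfolding Etrees_def by blast

end

lemma finite_dom_funs: "finite (dom_funs r)"
  by (simp add: dom_funs_def finite_PiE)

lemma finite_incr_trees: "finite (incr_trees r)"
  by (simp add: incr_trees_def finite_PiE)

lemma finite_Pi1: "finite (Pi1 r)"
proof (rule finite_subset)
  show "Pi1 r \<subseteq> Pow (Pow {1..r})"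
    unfolding Pi1_def partition_on_def by blast
qed simp

lemma dom_funs_fixing_1_eq_PiE:
  assumes "1 \<le> r"
  shows "{g \<in> dom_funs r. g 1 = 1} = Pi\<^sub>E {1..r} (\<lambda>i. if i = 1 then {1} else {i..r})"
proof (intro equalityI subsetI)
  fix g assume "g \<in> {g \<in> dom_funs r. g 1 = 1}"
  then show "g \<in> Pi\<^sub>E {1..r} (\<lambda>i. if i = 1 then {1} else {i..r})"
    by (auto simp: dom_funs_def PiE_iff)
next
  fix g assume g: "g \<in> Pi\<^sub>E {1..r} (\<lambda>i. if i = 1 then {1} else {i..r})"
  then have "g 1 = 1"
    using assms PiE_mem[OF g, of 1] by simp
  moreover have "g \<in> dom_funs r"
    using g unfolding dom_funs_def by (rule PiE_mono[THEN subsetD, rotated]) auto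
  ultimately show "g \<in> {g \<in> dom_funs r. g 1 = 1}"
    by simp
qed

lemma sum_Pi1_Dsum:
  fixes F :: "nat set set \<Rightarrow> 'a::comm_ring_1"
  assumes "1 \<le> r"
  shows "(\<Sum>P\<in>Pi1 r. Dsum r y P * F P) =
    (\<Sum>g\<in>{g \<in> dom_funs r. g 1 = 1}. wt r y g * F (induced_partition r g))"
proof -
  let ?G = "{g \<in> dom_funs r. induced_partition r g \<in> Pi1 r}"
  have "(\<Sum>P\<in>Pi1 r. Dsum r y P * F P) =
      (\<Sum>P\<in>Pi1 r. \<Sum>g\<in>{g \<in> ?G. induced_partition r g = P}. wt r y g * F (induced_partition r g))"
    unfolding Dsum_def sum_distrib_right by (intro sum.cong) auto
  also have "\<dots> = (\<Sum>g\<in>?G. wt r y g * F (induced_partition r g))"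
    by (rule sum.group) (auto simp: finite_dom_funs finite_Pi1)
  also have "?G = {g \<in> dom_funs r. g 1 = 1}"
    using dominating_function.induced_partition_in_Pi1_iff[OF dominating_function.intro] assms
    by blast
  finally show ?thesis .
qed

definition hook_choices :: "nat \<Rightarrow> (nat \<Rightarrow> nat) \<Rightarrow> nat \<Rightarrow> nat set" where
  "hook_choices r T v = (if v = 1 then {1} else hook r T v)"

context increasing_tree
begin

lemma PiE_hook_choices:
  assumes "1 \<le> r"
  shows "Pi\<^sub>E {1..r} (hook_choices r T) = {g \<in> dom_funs r. g 1 = 1 \<and> (\<forall>v\<in>{2..r}. g v \<in> hook r T v)}"
  (is "_ = ?G")
proof (intro equalityI subsetI)
  fix g assume g: "g \<in> Pi\<^sub>E {1..r} (hook_choices r T)"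
  have "Pi\<^sub>E {1..r} (hook_choices r T) \<subseteq> Pi\<^sub>E {1..r} (\<lambda>v. if v = 1 then {1} else {v..r})"
    using hook_subset by (intro PiE_mono) (auto simp: hook_choices_def)
  moreover have "g v \<in> hook r T v" if "v \<in> {2..r}" for v
    using PiE_mem[OF g, of v] that by (simp add: hook_choices_def)
  ultimately show "g \<in> ?G"
    using g dom_funs_fixing_1_eq_PiE[OF assms] by auto
next
  fix g assume g: "g \<in> ?G"
  then have "g \<in> extensional {1..r}"
    by (simp add: dom_funs_def PiE_iff)
  with g show "g \<in> Pi\<^sub>E {1..r} (hook_choices r T)"
    by (auto simp: PiE_iff hook_choices_def)
qed

lemma hook_product_eq_sum_PiE:
  assumes "1 \<le> r"
  shows "y 1 1 * (\<Prod>v\<in>{2..r}. x (T v) * (\<Sum>u\<in>hook r T v. y v u)) =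
    kappa r x T * (\<Sum>g\<in>Pi\<^sub>E {1..r} (hook_choices r T). wt r y g)"
proof -
  have "(\<Sum>g\<in>Pi\<^sub>E {1..r} (hook_choices r T). wt r y g) = (\<Prod>v\<in>{1..r}. \<Sum>u\<in>hook_choices r T v. y v u)"
    unfolding wt_def by (rule prod_sum_PiE[symmetric]) (auto simp: hook_choices_def hook_def)
  also have "\<dots> = y 1 1 * (\<Prod>v\<in>{2..r}. \<Sum>u\<in>hook r T v. y v u)"
  proof -
    have "{1..r} = insert 1 {2..r}"
      using assms by auto
    then show ?thesis
      by (simp add: hook_choices_def)
  qed
  finally show ?thesis
    by (simp add: prod.distrib prod_father_eq_kappa ac_simps)
qed

end

lemma y11_mult_Lpoly:
  fixes x :: "nat \<Rightarrow> 'a::comm_ring_1"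
  assumes r: "1 \<le> r"
  shows "y 1 1 * Lpoly r x y = (\<Sum>P\<in>Pi1 r. Dsum r y P * (\<Sum>T\<in>Etrees r P. kappa r x T))"
proof -
  let ?G = "{g \<in> dom_funs r. g 1 = 1}"
  let ?fits = "\<lambda>g T. \<forall>v\<in>{2..r}. g v \<in> hook r T v"
  have "(\<Sum>P\<in>Pi1 r. Dsum r y P * (\<Sum>T\<in>Etrees r P. kappa r x T)) =
      (\<Sum>g\<in>?G. wt r y g * (\<Sum>T\<in>Etrees r (induced_partition r g). kappa r x T))"
    by (rule sum_Pi1_Dsum[OF r])
  also have "\<dots> = (\<Sum>g\<in>?G. \<Sum>T\<in>{T \<in> incr_trees r. ?fits g T}. wt r y g * kappa r x T)"
    using dominating_function.Etrees_induced_partition[OF dominating_function.intro]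
    by (simp add: sum_distrib_left)
  also have "\<dots> = (\<Sum>T\<in>incr_trees r. \<Sum>g\<in>{g \<in> ?G. ?fits g T}. wt r y g * kappa r x T)"
    by (rule sum.swap_restrict) (auto simp: finite_dom_funs finite_incr_trees)
  also have "\<dots> = (\<Sum>T\<in>incr_trees r. kappa r x T * (\<Sum>g\<in>Pi\<^sub>E {1..r} (hook_choices r T). wt r y g))"
    using increasing_tree.PiE_hook_choices[OF increasing_tree.intro r]
    by (intro sum.cong refl) (simp add: sum_distrib_left mult.commute conj_assoc)
  also have "\<dots> = (\<Sum>T\<in>incr_trees r. y 1 1 * (\<Prod>v\<in>{2..r}. x (T v) * (\<Sum>u\<in>hook r T v. y v u)))"
    by (intro sum.cong refl) (simp only: increasing_tree.hook_product_eq_sum_PiE[OF increasing_tree.intro r])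
  also have "\<dots> = y 1 1 * Lpoly r x y"
    by (simp only: Lpoly_def sum_distrib_left)
  finally show ?thesis ..
qed

lemma bij_betw_nth_sorted_list_of_set_without_ends:
  fixes M :: "'a::linorder set"
  assumes "finite M" and "M \<noteq> {}"
  shows "bij_betw ((!) (sorted_list_of_set M)) {1..<card M} (M - {Min M})"
    and "bij_betw ((!) (sorted_list_of_set M)) {1..<card M - 1} (M - {Min M, Max M})"
proof -
  let ?L = "sorted_list_of_set M"
  have bij: "bij_betw ((!) ?L) {..<card M} M"
    using assms by (intro bij_betw_nth) simp_all
  have remove: "bij_betw ((!) ?L) ({..<card M} - C) (M - (!) ?L ` C)" if "C \<subseteq> {..<card M}" for C
    using bij that by (intro bij_betw_DiffI bij_betw_subset[OF bij]) (auto simp: bij_betw_def)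
  have k: "0 < card M"
    using assms by (simp add: card_gt_0_iff)
  have first: "?L ! 0 = Min M"
    using sorted_list_of_set_nonempty[OF assms] by simp
  have "?L ! (card M - 1) \<in> M"
    using k assms nth_mem[of "card M - 1" ?L] by simp
  moreover have "y \<le> ?L ! (card M - 1)" if "y \<in> M" for y
  proof -
    have "y \<in> set ?L"
      using that assms by simp
    then obtain j where "j < card M" "?L ! j = y"
      by (auto simp: in_set_conv_nth)
    then show ?thesis
      using sorted_nth_mono[OF sorted_sorted_list_of_set, of j "card M - 1" M] by simp
  qed
  ultimately have last: "?L ! (card M - 1) = Max M"
    using assms by (intro Max_eqI[symmetric])
  have "{1..<card M} = {..<card M} - {0}" "{1..<card M - 1} = {..<card M} - {0, card M - 1}"
    using k by auto
  then show "bij_betw ((!) ?L) {1..<card M} (M - {Min M})"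
    "bij_betw ((!) ?L) {1..<card M - 1} (M - {Min M, Max M})"
    using remove[of "{0}"] remove[of "{0, card M - 1}"] k first last by auto
qed

lemma Pi1_Max_image:
  assumes P: "P \<in> Pi1 r" and r: "1 \<le> r"
  shows "inj_on Max P" and "Max ` P \<subseteq> {1..r}" and "Min (Max ` P) = 1" and "Max (Max ` P) = r"
proof -
  have part: "partition_on {1..r} P" and single: "{1} \<in> P"
    using P by (auto simp: Pi1_def)
  have fin: "finite B" "B \<noteq> {}" "B \<subseteq> {1..r}" if "B \<in> P" for B
    using part that finite_subset[of B "{1..r}"] by (auto simp: partition_on_def)
  then have Max_mem: "Max B \<in> B \<inter> {1..r}" if "B \<in> P" for B
    using that by (meson IntI Max_in subsetD)
  show "inj_on Max P"
  proof (rule inj_onI)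
    fix B B' assume B: "B \<in> P" "B' \<in> P" and "Max B = Max B'"
    then have "Max B \<in> B \<inter> B'"
      using Max_mem[OF B(1)] Max_mem[OF B(2)] by auto
    with B show "B = B'"
      using partition_onD2[OF part] by (auto dest: disjointD)
  qed
  show sub: "Max ` P \<subseteq> {1..r}"
    using Max_mem by blast
  have "1 \<in> Max ` P"
    using single by (metis Max_singleton image_eqI)
  with sub show "Min (Max ` P) = 1"
    by (intro Min_eqI) (auto intro: finite_subset)
  have "r \<in> \<Union>P"
    using partition_onD1[OF part] r by auto
  then obtain B where "B \<in> P" "r \<in> B"
    by blast
  then have "Max B = r"
    using fin[of B] by (intro Max_eqI) auto
  then show "Max (Max ` P) = r"
    using sub \<open>B \<in> P\<close> by (intro Max_eqI) (auto intro: finite_subset)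
qed

lemma bij_betw_mu:
  assumes P: "P \<in> Pi1 r" and r: "1 \<le> r"
  shows "bij_betw (mu P) {2..card P - 1} (Max ` P - {1, r})"
    and "mu P ` {2..card P} = Max ` P - {1}"
proof -
  let ?M = "Max ` P"
  have fin: "finite ?M"
    using finite_subset[OF Pi1_Max_image(2)[OF P r]] by simp
  have ne: "?M \<noteq> {}"
    using P by (auto simp: Pi1_def)
  have "card ?M = card P"
    using card_image[OF Pi1_Max_image(1)[OF P r]] .
  then have nth_bij: "bij_betw ((!) (sorted_list_of_set ?M)) {1..<card P - 1} (?M - {1, r})"
      "bij_betw ((!) (sorted_list_of_set ?M)) {1..<card P} (?M - {1})"
    using bij_betw_nth_sorted_list_of_set_without_ends[OF fin ne] Pi1_Max_image(3,4)[OF P r]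
    by simp_all
  have shift: "bij_betw (\<lambda>i. i - 1) {2..n} {1..<n}" for n :: nat
    by (rule bij_betw_byWitness[where f' = Suc]) auto
  have "mu P = (!) (sorted_list_of_set ?M) \<circ> (\<lambda>i. i - 1)"
    by (simp add: mu_def fun_eq_iff)
  then show "bij_betw (mu P) {2..card P - 1} (?M - {1, r})" "mu P ` {2..card P} = ?M - {1}"
    using bij_betw_trans[OF shift nth_bij(1)] bij_betw_trans[OF shift nth_bij(2)]
    by (simp_all add: bij_betw_def)
qed

lemma sum_Clists_omega:
  fixes x :: "nat \<Rightarrow> 'a::comm_ring_1"
  assumes P: "P \<in> Pi1 r" and r: "2 \<le> r"
  shows "(\<Sum>c\<in>Clists P. omega r x c P) =
    x 1 * (\<Prod>i\<in>{2..r-1}. if i \<in> Max ` P then (\<Sum>j\<in>{1..i}. x j) else x i)"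
proof -
  define M where "M = Max ` P"
  let ?S = "\<lambda>i. \<Sum>j\<in>{1..i}. x j"
  have r1: "1 \<le> r"
    using r by simp
  have sub: "M \<subseteq> {1..r}"
    unfolding M_def by (rule Pi1_Max_image(2)[OF P r1])
  have "r \<in> M"
    using Max_in[of M] finite_subset[OF sub] Pi1_Max_image(4)[OF P r1] P
    by (auto simp: Pi1_def M_def)
  moreover have "{2..r-1} = {2..<r}"
    using r by auto
  ultimately have sets: "M - {1, r} = {2..r-1} \<inter> M" "{1..r} - (M - {1}) = insert 1 ({2..r-1} - M)"
    using sub by auto
  have "(\<Sum>c\<in>Clists P. omega r x c P) =
      (\<Sum>c\<in>Pi\<^sub>E {2..card P - 1} (\<lambda>i. {1..mu P i}). \<Prod>i\<in>{2..card P - 1}. x (c i)) *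
      (\<Prod>i\<in>{1..r} - (M - {1}). x i)"
    unfolding Clists_def omega_def bij_betw_mu(2)[OF P r1] sum_distrib_right M_def ..
  also have "(\<Sum>c\<in>Pi\<^sub>E {2..card P - 1} (\<lambda>i. {1..mu P i}). \<Prod>i\<in>{2..card P - 1}. x (c i)) =
      (\<Prod>i\<in>{2..card P - 1}. ?S (mu P i))"
    by (rule prod_sum_PiE[symmetric]) auto
  also have "\<dots> = (\<Prod>m\<in>{2..r-1} \<inter> M. ?S m)"
    unfolding sets(1)[symmetric] unfolding M_def by (rule prod.reindex_bij_betw[OF bij_betw_mu(1)[OF P r1]])
  also have "(\<Prod>i\<in>{2..r-1} \<inter> M. ?S i) * (\<Prod>i\<in>{1..r} - (M - {1}). x i) =
      x 1 * (\<Prod>i\<in>{2..r-1}. if i \<in> M then ?S i else x i)"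
    unfolding sets(2) by (simp add: prod.If_cases Diff_eq Int_def)
  finally show ?thesis
    unfolding M_def .
qed

lemma sum_row_weight:
  fixes x :: "nat \<Rightarrow> 'a::comm_ring_1"
  assumes "i \<le> r"
  shows "(\<Sum>u\<in>{i..r}. y i u * (if u = i then (\<Sum>j\<in>{1..i}. x j) else x i)) =
    (\<Sum>j\<in>{1..i}. x j * y i i) + (\<Sum>j\<in>{i+1..r}. x i * y i j)"
proof -
  have "{i..r} = insert i {i+1..r}"
    using assms by auto
  then show ?thesis
    by (simp add: sum_distrib_left sum_distrib_right ac_simps)
qed

lemma y11_mult_Rpoly_eq_sum_dom_funs:
  fixes x :: "nat \<Rightarrow> 'a::comm_ring_1"
  assumes r: "2 \<le> r"
  shows "y 1 1 * Rpoly r x y = x 1 * (\<Sum>g\<in>{g \<in> dom_funs r. g 1 = 1}.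
    wt r y g * (\<Prod>i\<in>{2..r-1}. if g i = i then (\<Sum>j\<in>{1..i}. x j) else x i))"
proof -
  let ?S = "\<lambda>i. \<Sum>j\<in>{1..i}. x j"
  define w where "w i u = (if i \<in> {2..r-1} then (if u = i then ?S i else x i) else 1)" for i u
  have split: "{1..r} = insert 1 (insert r {2..r-1})" "1 \<notin> insert r {2..r-1}" "r \<notin> {2..r-1}"
    using r by auto
  have "(\<Prod>i\<in>{1..r}. w i (g i)) = (\<Prod>i\<in>{2..r-1}. if g i = i then ?S i else x i)" for g
    unfolding split using split(2,3) r by (simp add: w_def)
  then have "wt r y g * (\<Prod>i\<in>{2..r-1}. if g i = i then ?S i else x i) =
      (\<Prod>i\<in>{1..r}. y i (g i) * w i (g i))" for g
    by (simp add: wt_def prod.distrib)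
  then have "(\<Sum>g\<in>{g \<in> dom_funs r. g 1 = 1}. wt r y g * (\<Prod>i\<in>{2..r-1}. if g i = i then ?S i else x i)) =
      (\<Sum>g\<in>Pi\<^sub>E {1..r} (\<lambda>i. if i = 1 then {1} else {i..r}). \<Prod>i\<in>{1..r}. y i (g i) * w i (g i))"
    using dom_funs_fixing_1_eq_PiE r by simp
  also have "\<dots> = (\<Prod>i\<in>{1..r}. \<Sum>u\<in>(if i = 1 then {1} else {i..r}). y i u * w i u)"
    by (rule prod_sum_PiE[symmetric]) auto
  also have "\<dots> = y 1 1 * (y r r * (\<Prod>i\<in>{2..r-1}. \<Sum>u\<in>{i..r}. y i u * (if u = i then ?S i else x i)))"
    unfolding split using split(2,3) r by (simp add: w_def)
  also have "(\<Prod>i\<in>{2..r-1}. \<Sum>u\<in>{i..r}. y i u * (if u = i then ?S i else x i)) =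
      (\<Prod>i\<in>{2..r-1}. (\<Sum>j\<in>{1..i}. x j * y i i) + (\<Sum>j\<in>{i+1..r}. x i * y i j))"
    by (intro prod.cong refl sum_row_weight) auto
  finally show ?thesis
    by (simp add: Rpoly_def ac_simps)
qed

lemma y11_mult_Rpoly:
  fixes x :: "nat \<Rightarrow> 'a::comm_ring_1"
  assumes r: "2 \<le> r"
  shows "y 1 1 * Rpoly r x y = (\<Sum>P\<in>Pi1 r. Dsum r y P * (\<Sum>c\<in>Clists P. omega r x c P))"
proof -
  let ?G = "{g \<in> dom_funs r. g 1 = 1}"
  let ?S = "\<lambda>i. \<Sum>j\<in>{1..i}. x j"
  have "(\<Sum>P\<in>Pi1 r. Dsum r y P * (\<Sum>c\<in>Clists P. omega r x c P)) =
      (\<Sum>g\<in>?G. wt r y g * (\<Sum>c\<in>Clists (induced_partition r g). omega r x c (induced_partition r g)))"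
    using r by (intro sum_Pi1_Dsum) simp
  also have "\<dots> = (\<Sum>g\<in>?G. wt r y g * (x 1 * (\<Prod>i\<in>{2..r-1}. if g i = i then ?S i else x i)))"
  proof (intro sum.cong refl arg_cong2[where f = "(*)"])
    fix g assume g: "g \<in> ?G"
    interpret dominating_function r g
      using g by unfold_locales simp
    have "induced_partition r g \<in> Pi1 r"
      using g r induced_partition_in_Pi1_iff by simp
    then have "(\<Sum>c\<in>Clists (induced_partition r g). omega r x c (induced_partition r g)) =
        x 1 * (\<Prod>i\<in>{2..r-1}. if i \<in> Max ` induced_partition r g then ?S i else x i)"
      using r by (rule sum_Clists_omega)
    also have "\<dots> = x 1 * (\<Prod>i\<in>{2..r-1}. if g i = i then ?S i else x i)"
      unfolding Max_induced_partition
      by (rule arg_cong[where f = "(*) (x 1)"], rule prod.cong) auto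
    finally show "(\<Sum>c\<in>Clists (induced_partition r g). omega r x c (induced_partition r g)) =
        x 1 * (\<Prod>i\<in>{2..r-1}. if g i = i then ?S i else x i)" .
  qed
  also have "\<dots> = x 1 * (\<Sum>g\<in>?G. wt r y g * (\<Prod>i\<in>{2..r-1}. if g i = i then ?S i else x i))"
    by (simp add: sum_distrib_left ac_simps)
  also have "\<dots> = y 1 1 * Rpoly r x y"
    by (rule y11_mult_Rpoly_eq_sum_dom_funs[OF r, symmetric])
  finally show ?thesis ..
qed

theorem proposition2p1:
  fixes r :: nat and x :: "nat \<Rightarrow> 'a::comm_ring_1" and y :: "nat \<Rightarrow> nat \<Rightarrow> 'a"
  assumes "r \<ge> 2"
  shows "y 1 1 * Lpoly r x y = (\<Sum>P\<in>Pi1 r. Dsum r y P * (\<Sum>T\<in>Etrees r P. kappa r x T))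
       \<and> y 1 1 * Rpoly r x y = (\<Sum>P\<in>Pi1 r. Dsum r y P * (\<Sum>c\<in>Clists P. omega r x c P))"
  using assms y11_mult_Lpoly[of r y x] y11_mult_Rpoly[of r y x] by simp

end
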